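(* Let $\mathcal{K}: C^0[0,1]\to C^0[0,1]$ be the backstepping kernel operator, i.e. $k=\mathcal{K}(\beta)$ is the continuous solution of $k(x) = -\beta(x) + \int_0^x \beta(x-y)k(y)\,dy$ for $x\in[0,1]$. Then for any $B>0$ and any pair $\beta_1,\beta_2\in C^0[0,1]$ with $\|\beta_1\|_\infty\le B$ and $\|\beta_2\|_\infty\le B$, $$\|\mathcal{K}(\beta_1)-\mathcal{K}(\beta_2)\|_\infty \le e^{3B}\,\|\beta_1-\beta_2\|_\infty .$$
   Context: $\|\cdot\|_\infty$ denotes the supremum norm over $[0,1]$. The convolution is $(a*b)(x)=\int_0^x a(x-y)b(y)\,dy$, so the kernel equation reads $\mathcal{K}(\beta) = -\beta + \beta*\mathcal{K}(\beta)$. *)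

theory Defs
  imports "HOL-Analysis.Analysis"
begin

definition supnorm :: "(real \<Rightarrow> real) \<Rightarrow> real" where
  "supnorm f = (SUP x\<in>{0..1}. \<bar>f x\<bar>)"

definition conv :: "(real \<Rightarrow> real) \<Rightarrow> (real \<Rightarrow> real) \<Rightarrow> real \<Rightarrow> real" where
  "conv a b x = integral {0..x} (\<lambda>y. a (x - y) * b y)"

definition kernel_eq :: "(real \<Rightarrow> real) \<Rightarrow> (real \<Rightarrow> real) \<Rightarrow> bool" where
  "kernel_eq \<beta> k \<longleftrightarrow> continuous_on {0..1} k \<and>
     (\<forall>x\<in>{0..1}. k x = - \<beta> x + conv \<beta> k x)"

text \<open>The backstepping kernel operator; functions on [0,1] are represented as
  real functions that vanish outside [0,1] (canonical representative).\<close>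
definition Kop :: "(real \<Rightarrow> real) \<Rightarrow> (real \<Rightarrow> real)" where
  "Kop \<beta> = (THE k. kernel_eq \<beta> k \<and> (\<forall>x. x \<notin> {0..1} \<longrightarrow> k x = 0))"

end

theory Submission
  imports Defs
begin

text \<open>The kernel equation is a Volterra equation of the second kind, u = f + a * u.
  If |a| \<le> B and |f x| \<le> C e^(A x) on [0,1], the n-fold convolution a * ... * a * f is bounded
  by C e^(A x) (B x)^n / n!, so the Neumann series converges uniformly to a solution with
  |u x| \<le> C e^((A + B) x); for f = 0 the same estimate forces u = 0, which gives uniqueness.
  The difference of the kernels of \<beta>1 and \<beta>2 solves such an equation with kernel \<beta>2 and
  forcing -(\<beta>1 - \<beta>2) + (\<beta>1 - \<beta>2) * Kop \<beta>1. Since |Kop \<beta>1 x| \<le> B e^(B x), the forcing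
  is bounded by D (1 + B x e^(B x)) \<le> D e^(2 B x) with D the sup norm of \<beta>1 - \<beta>2, and
  the difference of the kernels by D e^(3 B x).\<close>

section \<open>Convolution on [0,1]\<close>

lemma continuous_on_conv_integrand:
  fixes a w :: "real \<Rightarrow> real"
  assumes a: "continuous_on {0..1} a" and w: "continuous_on {0..1} w" and x: "x \<in> {0..1}"
  shows "continuous_on {0..x} (\<lambda>y. a (x - y) * w y)"
proof (intro continuous_on_mult)
  show "continuous_on {0..x} (\<lambda>y. a (x - y))"
    by (rule continuous_on_compose2[OF a]) (use x in \<open>auto intro!: continuous_intros\<close>)
  show "continuous_on {0..x} w"
    by (rule continuous_on_subset[OF w]) (use x in auto)
qed

lemma conv_integrable:
  fixes a w :: "real \<Rightarrow> real"
  assumes "continuous_on {0..1} a" "continuous_on {0..1} w" "x \<in> {0..1}"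
  shows "(\<lambda>y. a (x - y) * w y) integrable_on {0..x}"
  by (rule integrable_continuous_real[OF continuous_on_conv_integrand[OF assms]])

lemma conv_rescale:
  fixes x :: real
  assumes "0 \<le> x"
  shows "conv a w x = x * integral {0..1} (\<lambda>t. a (x - x * t) * w (x * t))"
proof (cases "x = 0")
  case True
  then show ?thesis by (simp add: conv_def)
next
  case False
  with assms have xp: "x > 0" by auto
  have "(\<lambda>t. t / x) ` {0..x} = {0..1}"
  proof
    show "(\<lambda>t. t / x) ` {0..x} \<subseteq> {0..1}" using xp by (auto simp: divide_le_eq_1)
    show "{0..1} \<subseteq> (\<lambda>t. t / x) ` {0..x}"
    proof
      fix t :: real assume "t \<in> {0..1}"
      then have "x * t \<in> {0..x}" "t = (x * t) / x" using xp by (auto simp: mult_le_cancel_left1)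
      then show "t \<in> (\<lambda>t. t / x) ` {0..x}" by blast
    qed
  qed
  then have "integral {0..1} (\<lambda>t. a (x - x * t) * w (x * t))
      = (1 / \<bar>x\<bar>) *\<^sub>R integral {0..x} (\<lambda>y. a (x - y) * w y)"
    using integral_stretch_real[of x 0 x "\<lambda>y. a (x - y) * w y"] xp by simp
  then show ?thesis using xp by (simp add: conv_def)
qed

text \<open>After rescaling the variable of integration to [0,1], continuity of the convolution is
  continuity of a parametric integral over a fixed interval.\<close>
lemma continuous_on_conv:
  fixes a w :: "real \<Rightarrow> real"
  assumes a: "continuous_on {0..1} a" and w: "continuous_on {0..1} w"
  shows "continuous_on {0..1} (conv a w)"
proof -
  have "(\<lambda>p. fst p - fst p * snd p) ` ({0..1} \<times> cbox 0 1) \<subseteq> {0..(1::real)}"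
    by (auto simp: mult_left_le) (smt (verit) mult_nonneg_nonneg)
  moreover have "(\<lambda>p. fst p * snd p) ` ({0..1} \<times> cbox 0 1) \<subseteq> {0..(1::real)}"
    by (auto simp: mult_le_one)
  ultimately have "continuous_on ({0..1} \<times> cbox 0 1)
      (\<lambda>p. a (fst p - fst p * snd p) * w (fst p * snd p))"
    by (intro continuous_on_mult continuous_on_compose2[OF a] continuous_on_compose2[OF w]
        continuous_intros)
  then have "continuous_on {0..1} (\<lambda>x. integral (cbox 0 1) (\<lambda>t. a (x - x * t) * w (x * t)))"
    by (intro integral_continuous_on_param) (simp add: case_prod_beta)
  then have "continuous_on {0..1} (\<lambda>x. x * integral {0..1} (\<lambda>t. a (x - x * t) * w (x * t)))"
    by (intro continuous_intros) simp
  then show ?thesis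
    by (rule continuous_on_cong[THEN iffD1, rotated -1]) (auto simp: conv_rescale)
qed

lemma conv_diff_right:
  fixes a g h :: "real \<Rightarrow> real"
  assumes "continuous_on {0..1} a" "continuous_on {0..1} g" "continuous_on {0..1} h"
    and "x \<in> {0..1}"
  shows "conv a (\<lambda>y. g y - h y) x = conv a g x - conv a h x"
proof -
  have "conv a g x - conv a h x = integral {0..x} (\<lambda>y. a (x - y) * g y - a (x - y) * h y)"
    unfolding conv_def by (rule integral_diff[symmetric] conv_integrable assms)+
  then show ?thesis by (simp add: conv_def right_diff_distrib)
qed

lemma conv_diff_left:
  fixes a b k :: "real \<Rightarrow> real"
  assumes "continuous_on {0..1} a" "continuous_on {0..1} b" "continuous_on {0..1} k"
    and "x \<in> {0..1}"
  shows "conv (\<lambda>y. a y - b y) k x = conv a k x - conv b k x"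
proof -
  have "conv a k x - conv b k x = integral {0..x} (\<lambda>y. a (x - y) * k y - b (x - y) * k y)"
    unfolding conv_def by (rule integral_diff[symmetric] conv_integrable assms)+
  then show ?thesis by (simp add: conv_def left_diff_distrib)
qed

lemma conv_sum_right:
  fixes a :: "real \<Rightarrow> real" and d :: "nat \<Rightarrow> real \<Rightarrow> real"
  assumes "finite I" "continuous_on {0..1} a" "\<And>i. continuous_on {0..1} (d i)" "x \<in> {0..1}"
  shows "conv a (\<lambda>y. \<Sum>i\<in>I. d i y) x = (\<Sum>i\<in>I. conv a (d i) x)"
proof -
  have "(\<Sum>i\<in>I. conv a (d i) x) = integral {0..x} (\<lambda>y. \<Sum>i\<in>I. a (x - y) * d i y)"
    unfolding conv_def by (rule integral_sum[symmetric]) (auto intro: conv_integrable assms)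
  then show ?thesis by (simp add: conv_def sum_distrib_left)
qed

lemma tendsto_conv_uniform_limit:
  fixes a u :: "real \<Rightarrow> real" and g :: "nat \<Rightarrow> real \<Rightarrow> real"
  assumes a: "continuous_on {0..1} a" and g: "\<And>n. continuous_on {0..1} (g n)"
    and lim: "uniform_limit {0..1} g u sequentially" and x: "x \<in> {0..1}"
  shows "(\<lambda>n. conv a (g n) x) \<longlonglongrightarrow> conv a u x"
proof -
  have u: "continuous_on {0..1} u"
    by (rule uniform_limit_theorem[OF _ lim]) (auto intro: always_eventually g)
  have sub: "{0..x} \<subseteq> {0..1}" using x by auto
  have "continuous_on {0..x} (\<lambda>y. a (x - y))"
    by (rule continuous_on_compose2[OF a]) (use x in \<open>auto intro!: continuous_intros\<close>)
  then have "uniform_limit {0..x} (\<lambda>n y. a (x - y) * g n y) (\<lambda>y. a (x - y) * u y) sequentially"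
    by (intro uniform_lim_mult uniform_limit_const uniform_limit_on_subset[OF lim sub]
        compact_imp_bounded compact_continuous_image compact_Icc continuous_on_subset[OF u sub])
  then obtain I J where I: "\<And>n. ((\<lambda>y. a (x - y) * g n y) has_integral I n) {0..x}"
      and J: "((\<lambda>y. a (x - y) * u y) has_integral J) {0..x}" and IJ: "I \<longlonglongrightarrow> J"
    by (rule uniform_limit_integral) (auto intro: continuous_on_conv_integrand a g u x)
  show ?thesis using IJ unfolding conv_def integral_unique[OF I] integral_unique[OF J] .
qed

lemma has_integral_power_Icc:
  fixes x :: real
  assumes "0 \<le> x"
  shows "((\<lambda>y. y ^ n) has_integral x ^ Suc n / real (Suc n)) {0..x}"
proof -
  have "((\<lambda>y. y ^ n) has_integral x ^ Suc n / real (Suc n) - 0 ^ Suc n / real (Suc n)) {0..x}"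
  proof (rule fundamental_theorem_of_calculus[OF assms])
    fix y :: real
    have "((\<lambda>y. y ^ Suc n / real (Suc n)) has_real_derivative y ^ n) (at y within {0..x})"
      by (rule derivative_eq_intros refl | simp)+
    then show "((\<lambda>y. y ^ Suc n / real (Suc n)) has_vector_derivative y ^ n) (at y within {0..x})"
      by (simp add: has_real_derivative_iff_has_vector_derivative)
  qed
  then show ?thesis by simp
qed

lemma abs_conv_le_exp_power:
  fixes a w :: "real \<Rightarrow> real"
  assumes a: "continuous_on {0..1} a" and w: "continuous_on {0..1} w" and x: "x \<in> {0..1}"
    and "B \<ge> 0" "A \<ge> 0" "C \<ge> 0"
    and a_le: "\<And>y. y \<in> {0..1} \<Longrightarrow> \<bar>a y\<bar> \<le> B"
    and w_le: "\<And>y. y \<in> {0..1} \<Longrightarrow> \<bar>w y\<bar> \<le> C * exp (A * y) * (B * y) ^ n / fact n"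
  shows "\<bar>conv a w x\<bar> \<le> C * exp (A * x) * (B * x) ^ Suc n / fact (Suc n)"
proof -
  define K where "K = B * C * exp (A * x) * B ^ n / fact n"
  have K_int: "((\<lambda>y. K * y ^ n) has_integral K * (x ^ Suc n / real (Suc n))) {0..x}"
    using x by (intro has_integral_mult_right has_integral_power_Icc) auto
  have "norm (integral {0..x} (\<lambda>y. a (x - y) * w y)) \<le> integral {0..x} (\<lambda>y. K * y ^ n)"
  proof (rule integral_norm_bound_integral)
    show "(\<lambda>y. a (x - y) * w y) integrable_on {0..x}" by (rule conv_integrable[OF a w x])
    show "(\<lambda>y. K * y ^ n) integrable_on {0..x}" using K_int by blast
    fix y assume y: "y \<in> {0..x}"
    then have "y \<in> {0..1}" "x - y \<in> {0..1}" using x by auto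
    then have "\<bar>a (x - y)\<bar> * \<bar>w y\<bar> \<le> B * (C * exp (A * y) * (B * y) ^ n / fact n)"
      using \<open>B \<ge> 0\<close> by (intro mult_mono a_le w_le) auto
    also have "\<dots> \<le> B * (C * exp (A * x) * (B * y) ^ n / fact n)"
      using y assms(4-6)
      by (intro mult_left_mono divide_right_mono mult_right_mono) (auto intro: mult_left_mono)
    also have "\<dots> = K * y ^ n" by (simp add: K_def power_mult_distrib)
    finally show "norm (a (x - y) * w y) \<le> K * y ^ n" by (simp add: abs_mult)
  qed
  also have "\<dots> = K * (x ^ Suc n / real (Suc n))" using K_int by (rule integral_unique)
  also have "\<dots> = C * exp (A * x) * (B * x) ^ Suc n / fact (Suc n)"
    by (simp add: K_def power_mult_distrib field_simps)
  finally show ?thesis by (simp add: conv_def)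
qed

section \<open>Volterra equations of the second kind\<close>

definition volterra_solution :: "(real \<Rightarrow> real) \<Rightarrow> (real \<Rightarrow> real) \<Rightarrow> (real \<Rightarrow> real) \<Rightarrow> bool" where
  "volterra_solution a f u \<longleftrightarrow>
     continuous_on {0..1} u \<and> (\<forall>x\<in>{0..1}. u x = f x + conv a u x)"

lemma volterra_homogeneous_eq_0:
  fixes a w :: "real \<Rightarrow> real"
  assumes a: "continuous_on {0..1} a" and w: "continuous_on {0..1} w"
    and eq: "\<And>x. x \<in> {0..1} \<Longrightarrow> w x = conv a w x" and x: "x \<in> {0..1}"
  shows "w x = 0"
proof -
  obtain B where B: "B \<ge> 0" "\<And>y. y \<in> {0..1} \<Longrightarrow> \<bar>a y\<bar> \<le> B"
    using continuous_on_compact_bound[OF compact_Icc a] by auto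
  obtain M where M: "M \<ge> 0" "\<And>y. y \<in> {0..1} \<Longrightarrow> \<bar>w y\<bar> \<le> M"
    using continuous_on_compact_bound[OF compact_Icc w] by auto
  have w_le: "\<bar>w y\<bar> \<le> M * exp (0 * y) * (B * y) ^ n / fact n" if "y \<in> {0..1}" for n y
    using that
  proof (induction n arbitrary: y)
    case 0
    then show ?case using M by simp
  next
    case (Suc n)
    then show ?case
      using eq abs_conv_le_exp_power[OF a w Suc.prems B(1) order_refl M(1) B(2) Suc.IH] by simp
  qed
  have "(\<lambda>n. M * (inverse (fact n) * (B * x) ^ n)) \<longlonglongrightarrow> M * 0"
    by (intro tendsto_mult tendsto_const summable_LIMSEQ_zero summable_exp)
  moreover have "\<bar>w x\<bar> \<le> M * (inverse (fact n) * (B * x) ^ n)" for n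
    using w_le[OF x, of n] by (simp add: field_simps)
  ultimately have "\<bar>w x\<bar> \<le> 0"
    by (intro tendsto_lowerbound[where F=sequentially]) (auto intro: always_eventually)
  then show ?thesis by simp
qed

lemma volterra_solution_unique:
  assumes a: "continuous_on {0..1} a"
    and u: "volterra_solution a f u" and v: "volterra_solution a f v" and x: "x \<in> {0..1}"
  shows "u x = v x"
proof -
  have uc: "continuous_on {0..1} u" and vc: "continuous_on {0..1} v"
    using u v by (auto simp: volterra_solution_def)
  have "u x - v x = 0"
  proof (rule volterra_homogeneous_eq_0[OF a _ _ x])
    show "continuous_on {0..1} (\<lambda>y. u y - v y)" by (intro continuous_intros uc vc)
    show "u y - v y = conv a (\<lambda>y. u y - v y) y" if "y \<in> {0..1}" for y
      using u v that conv_diff_right[OF a uc vc that] by (simp add: volterra_solution_def)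
  qed
  then show ?thesis by simp
qed

fun conv_iterate :: "(real \<Rightarrow> real) \<Rightarrow> (real \<Rightarrow> real) \<Rightarrow> nat \<Rightarrow> real \<Rightarrow> real" where
  "conv_iterate a f 0 = f"
| "conv_iterate a f (Suc n) = conv a (conv_iterate a f n)"

definition neumann_series :: "(real \<Rightarrow> real) \<Rightarrow> (real \<Rightarrow> real) \<Rightarrow> real \<Rightarrow> real" where
  "neumann_series a f x = (\<Sum>n. conv_iterate a f n x)"

lemma continuous_on_conv_iterate:
  assumes "continuous_on {0..1} a" "continuous_on {0..1} f"
  shows "continuous_on {0..1} (conv_iterate a f n)"
  by (induction n) (auto intro: continuous_on_conv assms)

lemma abs_conv_iterate_le:
  assumes a: "continuous_on {0..1} a" and f: "continuous_on {0..1} f"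
    and "B \<ge> 0" "A \<ge> 0" "C \<ge> 0"
    and "\<And>y. y \<in> {0..1} \<Longrightarrow> \<bar>a y\<bar> \<le> B"
    and "\<And>y. y \<in> {0..1} \<Longrightarrow> \<bar>f y\<bar> \<le> C * exp (A * y)"
    and x: "x \<in> {0..1}"
  shows "\<bar>conv_iterate a f n x\<bar> \<le> C * exp (A * x) * (B * x) ^ n / fact n"
  using x
proof (induction n arbitrary: x)
  case 0
  then show ?case using assms by simp
next
  case (Suc n)
  then show ?case
    using abs_conv_le_exp_power[OF a continuous_on_conv_iterate[OF a f] _ assms(3-6)] by simp
qed

lemma uniform_limit_neumann_series:
  assumes a: "continuous_on {0..1} a" and f: "continuous_on {0..1} f"
  shows "uniform_limit {0..1} (\<lambda>N x. \<Sum>n<N. conv_iterate a f n x) (neumann_series a f) sequentially"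
proof -
  obtain B where B: "B \<ge> 0" "\<And>y. y \<in> {0..1} \<Longrightarrow> \<bar>a y\<bar> \<le> B"
    using continuous_on_compact_bound[OF compact_Icc a] by auto
  obtain C where C: "C \<ge> 0" "\<And>y. y \<in> {0..1} \<Longrightarrow> \<bar>f y\<bar> \<le> C"
    using continuous_on_compact_bound[OF compact_Icc f] by auto
  have "\<bar>conv_iterate a f n y\<bar> \<le> C * (inverse (fact n) * B ^ n)" if y: "y \<in> {0..1}" for n y
  proof -
    have "\<bar>conv_iterate a f n y\<bar> \<le> C * exp (0 * y) * (B * y) ^ n / fact n"
      using abs_conv_iterate_le[OF a f B(1) order_refl C(1) B(2) _ y] C(2) by simp
    also have "\<dots> \<le> C * B ^ n / fact n"
    proof -
      have "(B * y) ^ n \<le> B ^ n"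
        using y B by (intro power_mono) (auto simp: mult_left_le)
      then show ?thesis using C by (simp add: divide_right_mono mult_left_mono)
    qed
    finally show ?thesis by (simp add: field_simps)
  qed
  then show ?thesis
    unfolding neumann_series_def
    by (intro Weierstrass_m_test[where M = "\<lambda>n. C * (inverse (fact n) * B ^ n)"])
      (auto intro: summable_mult summable_exp)
qed

lemma volterra_solution_neumann_series:
  assumes a: "continuous_on {0..1} a" and f: "continuous_on {0..1} f"
  shows "volterra_solution a f (neumann_series a f)"
proof -
  let ?S = "\<lambda>N x. \<Sum>n<N. conv_iterate a f n x"
  note lim = uniform_limit_neumann_series[OF a f]
  have S_cont: "continuous_on {0..1} (?S N)" for N
    by (intro continuous_on_sum continuous_on_conv_iterate a f)
  have "neumann_series a f x = f x + conv a (neumann_series a f) x" if x: "x \<in> {0..1}" for x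
  proof -
    have "?S (Suc N) x = f x + conv a (?S N) x" for N
      by (simp add: sum.lessThan_Suc_shift conv_sum_right[OF _ a continuous_on_conv_iterate[OF a f] x]
          del: sum.lessThan_Suc)
    moreover have "(\<lambda>N. ?S (Suc N) x) \<longlonglongrightarrow> neumann_series a f x"
      using tendsto_uniform_limitI[OF lim x] by (rule LIMSEQ_Suc)
    moreover have "(\<lambda>N. f x + conv a (?S N) x) \<longlonglongrightarrow> f x + conv a (neumann_series a f) x"
      by (intro tendsto_add tendsto_const tendsto_conv_uniform_limit[OF a S_cont lim x])
    ultimately show ?thesis using LIMSEQ_unique by fastforce
  qed
  moreover have "continuous_on {0..1} (neumann_series a f)"
    by (rule uniform_limit_theorem[OF _ lim]) (auto intro: always_eventually S_cont)
  ultimately show ?thesis by (simp add: volterra_solution_def)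
qed

lemma abs_neumann_series_le:
  assumes a: "continuous_on {0..1} a" and f: "continuous_on {0..1} f"
    and "B \<ge> 0" "A \<ge> 0" "C \<ge> 0"
    and "\<And>y. y \<in> {0..1} \<Longrightarrow> \<bar>a y\<bar> \<le> B"
    and "\<And>y. y \<in> {0..1} \<Longrightarrow> \<bar>f y\<bar> \<le> C * exp (A * y)"
    and x: "x \<in> {0..1}"
  shows "\<bar>neumann_series a f x\<bar> \<le> C * exp ((A + B) * x)"
proof -
  have "\<bar>conv_iterate a f n x\<bar> \<le> C * exp (A * x) * ((B * x) ^ n /\<^sub>R fact n)" for n
    using abs_conv_iterate_le[OF assms] by (simp add: field_simps)
  then have "\<bar>neumann_series a f x\<bar> \<le> (\<Sum>n. C * exp (A * x) * ((B * x) ^ n /\<^sub>R fact n))"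
    unfolding neumann_series_def
    by (intro norm_suminf_le[where 'a=real, unfolded real_norm_def] summable_mult summable_exp_generic)
  also have "\<dots> = C * exp (A * x) * exp (B * x)"
    using sums_mult[OF exp_converges] by (rule sums_unique[symmetric])
  finally show ?thesis by (simp add: distrib_right exp_add mult.assoc)
qed

lemma volterra_solution_abs_le:
  assumes a: "continuous_on {0..1} a" and f: "continuous_on {0..1} f"
    and u: "volterra_solution a f u"
    and "B \<ge> 0" "A \<ge> 0" "C \<ge> 0"
    and "\<And>y. y \<in> {0..1} \<Longrightarrow> \<bar>a y\<bar> \<le> B"
    and "\<And>y. y \<in> {0..1} \<Longrightarrow> \<bar>f y\<bar> \<le> C * exp (A * y)"
    and x: "x \<in> {0..1}"
  shows "\<bar>u x\<bar> \<le> C * exp ((A + B) * x)"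
  using volterra_solution_unique[OF a u volterra_solution_neumann_series[OF a f] x]
    abs_neumann_series_le[OF a f assms(4-8) x] by simp

section \<open>The kernel operator\<close>

lemma abs_le_supnorm:
  assumes "continuous_on {0..1} g" "y \<in> {0..1}"
  shows "\<bar>g y\<bar> \<le> supnorm g"
proof -
  obtain M where "\<And>y. y \<in> {0..1} \<Longrightarrow> \<bar>g y\<bar> \<le> M"
    using continuous_on_compact_bound[OF compact_Icc assms(1)] by auto
  then have "bdd_above ((\<lambda>x. \<bar>g x\<bar>) ` {0..1})" by (intro bdd_aboveI2)
  then show ?thesis unfolding supnorm_def by (rule cSUP_upper[OF assms(2)])
qed

lemma supnorm_le:
  assumes "\<And>y. y \<in> {0..1} \<Longrightarrow> \<bar>g y\<bar> \<le> c"
  shows "supnorm g \<le> c"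
  unfolding supnorm_def by (rule cSUP_least) (use assms in auto)

lemma kernel_eq_iff_volterra_solution:
  "kernel_eq \<beta> k \<longleftrightarrow> volterra_solution \<beta> (\<lambda>x. - \<beta> x) k"
  by (simp add: kernel_eq_def volterra_solution_def)

lemma kernel_eq_Kop:
  assumes \<beta>: "continuous_on {0..1} \<beta>"
  shows "kernel_eq \<beta> (Kop \<beta>)"
proof -
  have m\<beta>: "continuous_on {0..1} (\<lambda>x. - \<beta> x)" by (intro continuous_intros \<beta>)
  define u where "u = neumann_series \<beta> (\<lambda>x. - \<beta> x)"
  define k where "k x = (if x \<in> {0..1} then u x else 0)" for x
  have u: "volterra_solution \<beta> (\<lambda>x. - \<beta> x) u"
    unfolding u_def by (rule volterra_solution_neumann_series[OF \<beta> m\<beta>])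
  have "conv \<beta> k x = conv \<beta> u x" if "x \<in> {0..1}" for x
    unfolding conv_def using that by (intro integral_cong) (auto simp: k_def)
  moreover have "continuous_on {0..1} k"
    using u[unfolded volterra_solution_def, THEN conjunct1]
    by (rule continuous_on_cong[THEN iffD1, rotated -1]) (auto simp: k_def)
  ultimately have k: "volterra_solution \<beta> (\<lambda>x. - \<beta> x) k"
    using u by (simp add: volterra_solution_def k_def)
  have "k' = k" if "kernel_eq \<beta> k' \<and> (\<forall>x. x \<notin> {0..1} \<longrightarrow> k' x = 0)" for k'
  proof
    fix x
    show "k' x = k x"
      using that volterra_solution_unique[OF \<beta> _ k, of k' x]
      by (cases "x \<in> {0..1}") (auto simp: kernel_eq_iff_volterra_solution k_def)
  qed
  then have "Kop \<beta> = k"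
    unfolding Kop_def using k
    by (intro the_equality) (auto simp: kernel_eq_iff_volterra_solution k_def)
  then show ?thesis using k by (simp add: kernel_eq_iff_volterra_solution)
qed

lemma abs_Kop_le:
  assumes \<beta>: "continuous_on {0..1} \<beta>" and "B \<ge> 0" and "\<And>y. y \<in> {0..1} \<Longrightarrow> \<bar>\<beta> y\<bar> \<le> B"
    and "x \<in> {0..1}"
  shows "\<bar>Kop \<beta> x\<bar> \<le> B * exp (B * x)"
  using volterra_solution_abs_le[of \<beta> "\<lambda>x. - \<beta> x" "Kop \<beta>" B 0 B x] assms
    kernel_eq_Kop[OF \<beta>]
  by (simp add: kernel_eq_iff_volterra_solution continuous_intros)

lemma volterra_solution_kernel_diff:
  assumes c1: "continuous_on {0..1} \<beta>1" and c2: "continuous_on {0..1} \<beta>2"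
    and k1: "kernel_eq \<beta>1 k1" and k2: "kernel_eq \<beta>2 k2"
  shows "volterra_solution \<beta>2 (\<lambda>x. - (\<beta>1 x - \<beta>2 x) + conv (\<lambda>y. \<beta>1 y - \<beta>2 y) k1 x)
           (\<lambda>x. k1 x - k2 x)"
proof -
  have k1c: "continuous_on {0..1} k1" and k2c: "continuous_on {0..1} k2"
    using k1 k2 by (auto simp: kernel_eq_def)
  have "k1 x - k2 x = - (\<beta>1 x - \<beta>2 x) + conv (\<lambda>y. \<beta>1 y - \<beta>2 y) k1 x
      + conv \<beta>2 (\<lambda>y. k1 y - k2 y) x" if x: "x \<in> {0..1}" for x
    using k1 k2 x conv_diff_left[OF c1 c2 k1c x] conv_diff_right[OF c2 k1c k2c x]
    by (simp add: kernel_eq_def)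
  then show ?thesis
    by (simp add: volterra_solution_def continuous_intros k1c k2c)
qed

lemma one_add_mult_exp_le_exp_double:
  fixes t :: real
  assumes "t \<ge> 0"
  shows "1 + t * exp t \<le> exp (2 * t)"
proof -
  have "1 \<le> exp t" using assms by simp
  moreover have "1 \<le> exp t - t" using exp_ge_add_one_self[of t] by linarith
  ultimately have "1 * 1 \<le> exp t * (exp t - t)" by (intro mult_mono) auto
  also have "\<dots> = exp (2 * t) - t * exp t"
    by (simp add: algebra_simps flip: exp_add)
  finally show ?thesis by simp
qed

lemma abs_kernel_diff_forcing_le:
  assumes c1: "continuous_on {0..1} \<beta>1" and c2: "continuous_on {0..1} \<beta>2"
    and k1: "continuous_on {0..1} k1" and "B \<ge> 0"
    and k1_le: "\<And>y. y \<in> {0..1} \<Longrightarrow> \<bar>k1 y\<bar> \<le> B * exp (B * y)"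
    and D: "\<And>y. y \<in> {0..1} \<Longrightarrow> \<bar>\<beta>1 y - \<beta>2 y\<bar> \<le> D"
    and x: "x \<in> {0..1}"
  shows "\<bar>- (\<beta>1 x - \<beta>2 x) + conv (\<lambda>y. \<beta>1 y - \<beta>2 y) k1 x\<bar> \<le> D * exp (2 * B * x)"
proof -
  have "D \<ge> 0" using D[OF x] by simp
  have "continuous_on {0..1} (\<lambda>y. \<beta>1 y - \<beta>2 y)" by (intro continuous_intros c1 c2)
  from abs_conv_le_exp_power[OF this k1 x \<open>D \<ge> 0\<close> \<open>B \<ge> 0\<close> \<open>B \<ge> 0\<close> D, of 0] k1_le
  have "\<bar>conv (\<lambda>y. \<beta>1 y - \<beta>2 y) k1 x\<bar> \<le> D * (B * x * exp (B * x))" by (simp add: mult_ac)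
  then have "\<bar>- (\<beta>1 x - \<beta>2 x) + conv (\<lambda>y. \<beta>1 y - \<beta>2 y) k1 x\<bar> \<le> D * (1 + B * x * exp (B * x))"
    using D[OF x] by (simp add: algebra_simps)
  also have "\<dots> \<le> D * exp (2 * B * x)"
    using one_add_mult_exp_le_exp_double[of "B * x"] x \<open>B \<ge> 0\<close> \<open>D \<ge> 0\<close>
    by (intro mult_left_mono) (auto simp: mult.assoc)
  finally show ?thesis .
qed

lemma abs_Kop_diff_le:
  assumes c1: "continuous_on {0..1} \<beta>1" and c2: "continuous_on {0..1} \<beta>2" and "B \<ge> 0"
    and b1: "\<And>y. y \<in> {0..1} \<Longrightarrow> \<bar>\<beta>1 y\<bar> \<le> B" and b2: "\<And>y. y \<in> {0..1} \<Longrightarrow> \<bar>\<beta>2 y\<bar> \<le> B"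
    and D: "\<And>y. y \<in> {0..1} \<Longrightarrow> \<bar>\<beta>1 y - \<beta>2 y\<bar> \<le> D"
    and x: "x \<in> {0..1}"
  shows "\<bar>Kop \<beta>1 x - Kop \<beta>2 x\<bar> \<le> D * exp (3 * B * x)"
proof -
  let ?g = "\<lambda>x. - (\<beta>1 x - \<beta>2 x) + conv (\<lambda>y. \<beta>1 y - \<beta>2 y) (Kop \<beta>1) x"
  have k1c: "continuous_on {0..1} (Kop \<beta>1)"
    using kernel_eq_Kop[OF c1] by (simp add: kernel_eq_def)
  have "D \<ge> 0" using D[OF x] by simp
  have "continuous_on {0..1} ?g"
    by (intro continuous_intros continuous_on_conv c1 c2 k1c)
  moreover have "volterra_solution \<beta>2 ?g (\<lambda>x. Kop \<beta>1 x - Kop \<beta>2 x)"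
    by (intro volterra_solution_kernel_diff kernel_eq_Kop c1 c2)
  moreover have "\<bar>?g y\<bar> \<le> D * exp (2 * B * y)" if "y \<in> {0..1}" for y
    using abs_Kop_le[OF c1 \<open>B \<ge> 0\<close> b1]
    by (intro abs_kernel_diff_forcing_le c1 c2 k1c \<open>B \<ge> 0\<close> D that)
  ultimately show ?thesis
    using volterra_solution_abs_le[where f = ?g and A = "2 * B",
        OF c2 _ _ \<open>B \<ge> 0\<close> _ \<open>D \<ge> 0\<close> b2 _ x] \<open>B \<ge> 0\<close>
    by (simp add: algebra_simps)
qed

theorem lemma1:
  fixes \<beta>1 \<beta>2 :: "real \<Rightarrow> real" and B :: real
  assumes "B > 0"
    and "continuous_on {0..1} \<beta>1" and "continuous_on {0..1} \<beta>2"
    and "supnorm \<beta>1 \<le> B" and "supnorm \<beta>2 \<le> B"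
  shows "supnorm (\<lambda>x. Kop \<beta>1 x - Kop \<beta>2 x) \<le> exp (3 * B) * supnorm (\<lambda>x. \<beta>1 x - \<beta>2 x)"
proof (rule supnorm_le)
  note c1 = assms(2) and c2 = assms(3)
  have b1: "\<bar>\<beta>1 y\<bar> \<le> B" and b2: "\<bar>\<beta>2 y\<bar> \<le> B" if "y \<in> {0..1}" for y
    using abs_le_supnorm[OF c1 that] abs_le_supnorm[OF c2 that] assms(4,5) by auto
  define D where "D = supnorm (\<lambda>x. \<beta>1 x - \<beta>2 x)"
  have D: "\<bar>\<beta>1 y - \<beta>2 y\<bar> \<le> D" if "y \<in> {0..1}" for y
    unfolding D_def using that by (intro abs_le_supnorm continuous_intros c1 c2)
  fix x :: real assume x: "x \<in> {0..1}"
  have "\<bar>Kop \<beta>1 x - Kop \<beta>2 x\<bar> \<le> D * exp (3 * B * x)"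
    using assms(1) by (intro abs_Kop_diff_le c1 c2 b1 b2 D x) simp
  also have "\<dots> \<le> D * exp (3 * B)"
    using x assms(1) D[OF x] by (intro mult_left_mono) (auto simp: mult_left_le)
  finally show "\<bar>Kop \<beta>1 x - Kop \<beta>2 x\<bar> \<le> exp (3 * B) * D" by (simp add: mult.commute)
qed

end
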